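(* Let $H=\sum_{i=1}^N c_iP_i$ be a Pauli Hamiltonian, $|\psi\rangle$ a state, $\mathcal{G}=(G^{[1]},\dots,G^{[m]})$ a grouping of $H$ and $\mathcal{R}=(G'^{[1]},\dots,G'^{[m]})$ a repacking of $\mathcal{G}$. Assume that $\sigma_{P_iP_k}=0$ for all distinct commuting $P_i,P_k\in\mathrm{supp}(H)$. Fix positive integer shot counts $M_1,\dots,M_m$ such that both $G^{[j]}$ and $G'^{[j]}$ are measured $M_j$ times. Let $\overline{E}_{\mathcal{G}}$ and $\overline{E}_{\mathcal{R}}$ be the shot-weighted averaging energy estimators for $\mathcal{G}$ and $\mathcal{R}$. If there exist $j$ and $P_s\in G'^{[j]}\setminus G^{[j]}$ with $\sigma^2_{P_s}>0$, then $\mathrm{Var}(\overline{E}_{\mathcal{R}})<\mathrm{Var}(\overline{E}_{\mathcal{G}})$.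
   Context: A Pauli Hamiltonian is $H=\sum_{i=1}^N c_iP_i$ with real nonzero $c_i$ and distinct $n$-qubit Pauli strings $P_i$; $\mathrm{supp}(H)=\{P_1,\dots,P_N\}$. For a state $|\psi\rangle$, $\langle P\rangle=\langle\psi|P|\psi\rangle$, $\sigma_P^2=1-\langle P\rangle^2$, and for commuting $P,Q$, $\sigma_{PQ}=\langle PQ\rangle-\langle P\rangle\langle Q\rangle$. A grouping is a list $(G^{[1]},\dots,G^{[m]})$ of pairwise disjoint sets of mutually commuting operators from $\mathrm{supp}(H)$ whose union is $\mathrm{supp}(H)$; an overlapped grouping drops disjointness. A repacking of a grouping $(G^{[1]},\dots,G^{[m]})$ is an overlapped grouping $(G'^{[1]},\dots,G'^{[m]})$ with $G^{[j]}\subseteq G'^{[j]}$ for all $j$. Measurement model: group $j$ is measured in $M_j$ independent shots, each shot giving simultaneous $\pm1$ outcomes of all operators in the group (single-shot outcome of $P$ has mean $\langle P\rangle$, variance $\sigma_P^2$; two operators in the same group have single-shot covariance $\sigma_{PQ}$); different groups use independent shots. With $\Gamma(i)=\{j:P_i\in \text{group } j\}$ and $\overline{\langle P_i\rangle}_{(j)}$ the sample mean of $P_i$ over group $j$'s shots, the shot-weighted averaging estimator is $\overline{E}=\sum_ic_i\sum_{j\in\Gamma(i)}\frac{M_j}{\sum_{k\in\Gamma(i)}M_k}\overline{\langle P_i\rangle}_{(j)}$. *)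

theory Defs
  imports "HOL-Probability.Probability"
begin

datatype pauli = PI | PX | PY | PZ

type_synonym pstring = "pauli list"

text \<open>Operators on C^(2^n) are represented by their matrix entries (indices below 2^n).\<close>
type_synonym cmat = "nat \<Rightarrow> nat \<Rightarrow> complex"

fun pmat :: "pauli \<Rightarrow> cmat" where
  "pmat PI r c = (if r = c then 1 else 0)"
| "pmat PX r c = (if r \<noteq> c then 1 else 0)"
| "pmat PY r c = (if r = c then 0 else if r = 0 then - \<i> else \<i>)"
| "pmat PZ r c = (if r = c then (if r = 0 then 1 else -1) else 0)"

definition qbit :: "nat \<Rightarrow> nat \<Rightarrow> nat" where
  "qbit r q = (r div 2 ^ q) mod 2"

text \<open>Matrix of the tensor product of the letters of a Pauli string (qubit q = bit q).\<close>
definition smat :: "pstring \<Rightarrow> cmat" where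
  "smat s r c = (\<Prod>q<length s. pmat (s ! q) (qbit r q) (qbit c q))"

definition mmul :: "nat \<Rightarrow> cmat \<Rightarrow> cmat \<Rightarrow> cmat" where
  "mmul d A B r c = (\<Sum>k<d. A r k * B k c)"

definition commute :: "nat \<Rightarrow> pstring \<Rightarrow> pstring \<Rightarrow> bool" where
  "commute n p q \<longleftrightarrow>
     (\<forall>r<2^n. \<forall>c<2^n. mmul (2^n) (smat p) (smat q) r c = mmul (2^n) (smat q) (smat p) r c)"

definition is_state :: "nat \<Rightarrow> (nat \<Rightarrow> complex) \<Rightarrow> bool" where
  "is_state n \<psi> \<longleftrightarrow> (\<Sum>r<2^n. (cmod (\<psi> r))\<^sup>2) = 1"

text \<open>Expectation value <psi|A|psi> (real for the Hermitian operators used here).\<close>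
definition expv :: "nat \<Rightarrow> (nat \<Rightarrow> complex) \<Rightarrow> cmat \<Rightarrow> real" where
  "expv n \<psi> A = Re (\<Sum>r<2^n. \<Sum>c<2^n. cnj (\<psi> r) * A r c * \<psi> c)"

definition ev :: "nat \<Rightarrow> (nat \<Rightarrow> complex) \<Rightarrow> pstring \<Rightarrow> real" where
  "ev n \<psi> p = expv n \<psi> (smat p)"

definition sigma2 :: "nat \<Rightarrow> (nat \<Rightarrow> complex) \<Rightarrow> pstring \<Rightarrow> real" where
  "sigma2 n \<psi> p = 1 - (ev n \<psi> p)\<^sup>2"

definition ev2 :: "nat \<Rightarrow> (nat \<Rightarrow> complex) \<Rightarrow> pstring \<Rightarrow> pstring \<Rightarrow> real" where
  "ev2 n \<psi> p q = expv n \<psi> (mmul (2^n) (smat p) (smat q))"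

definition sigma_pair :: "nat \<Rightarrow> (nat \<Rightarrow> complex) \<Rightarrow> pstring \<Rightarrow> pstring \<Rightarrow> real" where
  "sigma_pair n \<psi> p q = ev2 n \<psi> p q - ev n \<psi> p * ev n \<psi> q"

definition pauli_hamiltonian :: "nat \<Rightarrow> nat \<Rightarrow> (nat \<Rightarrow> real) \<Rightarrow> (nat \<Rightarrow> pstring) \<Rightarrow> bool" where
  "pauli_hamiltonian n N c P \<longleftrightarrow>
     (\<forall>i<N. c i \<noteq> 0) \<and> (\<forall>i<N. length (P i) = n) \<and> inj_on P {..<N}"

definition supp :: "nat \<Rightarrow> (nat \<Rightarrow> pstring) \<Rightarrow> pstring set" where
  "supp N P = P ` {..<N}"

definition overlapped_grouping :: "nat \<Rightarrow> pstring set \<Rightarrow> nat \<Rightarrow> (nat \<Rightarrow> pstring set) \<Rightarrow> bool" where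
  "overlapped_grouping n S m G \<longleftrightarrow>
     (\<forall>j<m. G j \<subseteq> S) \<and>
     (\<forall>j<m. \<forall>p\<in>G j. \<forall>q\<in>G j. commute n p q) \<and>
     (\<Union>j<m. G j) = S"

definition grouping :: "nat \<Rightarrow> pstring set \<Rightarrow> nat \<Rightarrow> (nat \<Rightarrow> pstring set) \<Rightarrow> bool" where
  "grouping n S m G \<longleftrightarrow> overlapped_grouping n S m G \<and>
     (\<forall>j<m. \<forall>k<m. j \<noteq> k \<longrightarrow> G j \<inter> G k = {})"

definition repacking :: "nat \<Rightarrow> pstring set \<Rightarrow> nat \<Rightarrow> (nat \<Rightarrow> pstring set) \<Rightarrow> (nat \<Rightarrow> pstring set) \<Rightarrow> bool" where
  "repacking n S m G G' \<longleftrightarrow> overlapped_grouping n S m G' \<and> (\<forall>j<m. G j \<subseteq> G' j)"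

text \<open>X j t p omega is the +-1 outcome of operator p in shot t (t < Ms j) of group j.\<close>
definition measurement_model ::
  "nat \<Rightarrow> (nat \<Rightarrow> complex) \<Rightarrow> nat \<Rightarrow> (nat \<Rightarrow> pstring set) \<Rightarrow> (nat \<Rightarrow> nat)
   \<Rightarrow> 'w measure \<Rightarrow> (nat \<Rightarrow> nat \<Rightarrow> pstring \<Rightarrow> 'w \<Rightarrow> real) \<Rightarrow> bool" where
  "measurement_model n \<psi> m G Ms M X \<longleftrightarrow>
     prob_space M \<and>
     (\<forall>j<m. \<forall>t<Ms j. \<forall>p\<in>G j. X j t p \<in> borel_measurable M) \<and>
     (\<forall>j<m. \<forall>t<Ms j. \<forall>p\<in>G j. \<forall>\<omega>\<in>space M. X j t p \<omega> \<in> {-1, 1}) \<and>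
     (\<forall>j<m. \<forall>t<Ms j. \<forall>p\<in>G j. integral\<^sup>L M (X j t p) = ev n \<psi> p) \<and>
     (\<forall>j<m. \<forall>t<Ms j. \<forall>p\<in>G j. \<forall>q\<in>G j. p \<noteq> q \<longrightarrow>
        integral\<^sup>L M (\<lambda>\<omega>. X j t p \<omega> * X j t q \<omega>) = ev2 n \<psi> p q) \<and>
     prob_space.indep_vars M (\<lambda>(j, t). Pi\<^sub>M (G j) (\<lambda>_. borel))
        (\<lambda>(j, t) \<omega>. restrict (\<lambda>p. X j t p \<omega>) (G j)) {(j, t). j < m \<and> t < Ms j}"

definition Gamma :: "nat \<Rightarrow> (nat \<Rightarrow> pstring set) \<Rightarrow> pstring \<Rightarrow> nat set" where
  "Gamma m G p = {j. j < m \<and> p \<in> G j}"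

definition sample_mean :: "(nat \<Rightarrow> nat) \<Rightarrow> (nat \<Rightarrow> nat \<Rightarrow> pstring \<Rightarrow> 'w \<Rightarrow> real) \<Rightarrow> nat \<Rightarrow> pstring \<Rightarrow> 'w \<Rightarrow> real" where
  "sample_mean Ms X j p \<omega> = (\<Sum>t<Ms j. X j t p \<omega>) / real (Ms j)"

definition estimator ::
  "nat \<Rightarrow> (nat \<Rightarrow> real) \<Rightarrow> (nat \<Rightarrow> pstring) \<Rightarrow> nat \<Rightarrow> (nat \<Rightarrow> pstring set) \<Rightarrow> (nat \<Rightarrow> nat)
   \<Rightarrow> (nat \<Rightarrow> nat \<Rightarrow> pstring \<Rightarrow> 'w \<Rightarrow> real) \<Rightarrow> 'w \<Rightarrow> real" where
  "estimator N c P m G Ms X \<omega> =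
     (\<Sum>i<N. c i * (\<Sum>j\<in>Gamma m G (P i).
        real (Ms j) / real (\<Sum>k\<in>Gamma m G (P i). Ms k) * sample_mean Ms X j (P i) \<omega>))"

definition variance :: "'w measure \<Rightarrow> ('w \<Rightarrow> real) \<Rightarrow> real" where
  "variance M f = integral\<^sup>L M (\<lambda>\<omega>. (f \<omega> - integral\<^sup>L M f)\<^sup>2)"

end

theory Submission
  imports Defs
begin

(* Outcomes from different shots are independent, and two distinct operators measured in the same
   shot commute, so by hypothesis their outcomes have zero covariance. Hence all single-shot outcomes
   entering the estimator are pairwise uncorrelated, and since the estimator gives weight c_i / S_i to
   every outcome of P_i, where S_i is the total number of shots measuring P_i, its variance is
   sum_i c_i^2 sigma_{P_i}^2 / S_i. Repacking can only add groups measuring P_i, so no S_i decreases,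
   and S_s increases by M_j for the operator P_s in G'^[j] - G^[j]. *)

lemma sum_divide_strict_anti:
  fixes f g h :: "'a \<Rightarrow> real"
  assumes "finite A"
    and "\<And>i. i \<in> A \<Longrightarrow> 0 \<le> f i" "\<And>i. i \<in> A \<Longrightarrow> 0 < g i" "\<And>i. i \<in> A \<Longrightarrow> g i \<le> h i"
    and "s \<in> A" "0 < f s" "g s < h s"
  shows "(\<Sum>i\<in>A. f i / h i) < (\<Sum>i\<in>A. f i / g i)"
proof (rule sum_strict_mono_ex1)
  show "\<forall>i\<in>A. f i / h i \<le> f i / g i"
    using assms(2-4) by (meson divide_left_mono order_less_le_trans mult_pos_pos)
  show "\<exists>i\<in>A. f i / h i < f i / g i"
    using assms(3,5-7) by (meson divide_strict_left_mono order_less_trans mult_pos_pos)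
qed fact

lemma integrable_pm_one:
  assumes "prob_space M" "f \<in> borel_measurable M" "\<And>\<omega>. \<omega> \<in> space M \<Longrightarrow> f \<omega> \<in> {-1, 1::real}"
  shows "integrable M f"
proof -
  interpret prob_space M by fact
  have "\<bar>f \<omega>\<bar> \<le> 1" if "\<omega> \<in> space M" for \<omega>
    using assms(3)[OF that] by auto
  then show ?thesis
    by (intro integrable_const_bound[where B=1] AE_I2) (simp_all add: assms(2))
qed

lemma variance_pm_one:
  assumes "prob_space M" "f \<in> borel_measurable M" "\<And>\<omega>. \<omega> \<in> space M \<Longrightarrow> f \<omega> \<in> {-1, 1::real}"
  shows "variance M f = 1 - (integral\<^sup>L M f)\<^sup>2"
proof -
  interpret prob_space M by fact
  have sq1: "(f \<omega>)\<^sup>2 = 1" if "\<omega> \<in> space M" for \<omega>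
    using assms(3)[OF that] by auto
  have "integrable M f"
    using assms by (rule integrable_pm_one)
  moreover have "integrable M (\<lambda>\<omega>. (f \<omega>)\<^sup>2)"
    using assms(1,2) sq1 by (intro integrable_pm_one) auto
  moreover have "(\<integral>\<omega>. (f \<omega>)\<^sup>2 \<partial>M) = 1"
    using sq1 prob_space by (subst Bochner_Integration.integral_cong[of _ _ _ "\<lambda>_. 1"]) auto
  ultimately show ?thesis
    unfolding Defs.variance_def by (simp add: variance_eq)
qed

lemma
  fixes X Y :: "'a \<Rightarrow> real"
  assumes "prob_space M" "integrable M X" "integrable M Y" "integrable M (\<lambda>\<omega>. X \<omega> * Y \<omega>)"
  shows integrable_centered_mult: "integrable M (\<lambda>\<omega>. (X \<omega> - integral\<^sup>L M X) * (Y \<omega> - integral\<^sup>L M Y))"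
    and integral_centered_mult: "(\<integral>\<omega>. (X \<omega> - integral\<^sup>L M X) * (Y \<omega> - integral\<^sup>L M Y) \<partial>M)
      = (\<integral>\<omega>. X \<omega> * Y \<omega> \<partial>M) - integral\<^sup>L M X * integral\<^sup>L M Y"
proof -
  interpret prob_space M by fact
  have expand: "(\<lambda>\<omega>. (X \<omega> - integral\<^sup>L M X) * (Y \<omega> - integral\<^sup>L M Y))
      = (\<lambda>\<omega>. (X \<omega> * Y \<omega> - integral\<^sup>L M Y * X \<omega>) - (integral\<^sup>L M X * Y \<omega> - integral\<^sup>L M X * integral\<^sup>L M Y))"
    by (auto simp: algebra_simps)
  show "integrable M (\<lambda>\<omega>. (X \<omega> - integral\<^sup>L M X) * (Y \<omega> - integral\<^sup>L M Y))"
    unfolding expand using assms by simp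
  show "(\<integral>\<omega>. (X \<omega> - integral\<^sup>L M X) * (Y \<omega> - integral\<^sup>L M Y) \<partial>M)
      = (\<integral>\<omega>. X \<omega> * Y \<omega> \<partial>M) - integral\<^sup>L M X * integral\<^sup>L M Y"
    unfolding expand using assms by (simp add: prob_space)
qed

lemma variance_sum_uncorrelated:
  fixes Y :: "'i \<Rightarrow> 'a \<Rightarrow> real"
  assumes "prob_space M" "finite I"
    and int: "\<And>k. k \<in> I \<Longrightarrow> integrable M (Y k)"
    and int_mult: "\<And>k l. k \<in> I \<Longrightarrow> l \<in> I \<Longrightarrow> integrable M (\<lambda>\<omega>. Y k \<omega> * Y l \<omega>)"
    and uncorrelated: "\<And>k l. k \<in> I \<Longrightarrow> l \<in> I \<Longrightarrow> k \<noteq> l \<Longrightarrow>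
      (\<integral>\<omega>. Y k \<omega> * Y l \<omega> \<partial>M) = integral\<^sup>L M (Y k) * integral\<^sup>L M (Y l)"
  shows "variance M (\<lambda>\<omega>. \<Sum>k\<in>I. a k * Y k \<omega>) = (\<Sum>k\<in>I. (a k)\<^sup>2 * variance M (Y k))"
proof -
  define \<mu> where "\<mu> k = integral\<^sup>L M (Y k)" for k
  define C where "C k l = (\<lambda>\<omega>. (Y k \<omega> - \<mu> k) * (Y l \<omega> - \<mu> l))" for k l
  have C_int: "integrable M (C k l)" if "k \<in> I" "l \<in> I" for k l
    unfolding C_def \<mu>_def by (rule integrable_centered_mult) (simp_all add: assms(1) int int_mult that)
  have C_integral: "integral\<^sup>L M (C k l) = (if k = l then variance M (Y k) else 0)"
    if "k \<in> I" "l \<in> I" for k l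
  proof (cases "k = l")
    case False
    then show ?thesis
      using integral_centered_mult[OF assms(1) int[OF that(1)] int[OF that(2)] int_mult[OF that]]
        uncorrelated[OF that]
      by (simp add: C_def \<mu>_def)
  qed (simp add: C_def \<mu>_def Defs.variance_def power2_eq_square)
  have "(\<integral>\<omega>. (\<Sum>k\<in>I. a k * Y k \<omega>) \<partial>M) = (\<Sum>k\<in>I. a k * \<mu> k)"
    using int by (simp add: \<mu>_def)
  then have "variance M (\<lambda>\<omega>. \<Sum>k\<in>I. a k * Y k \<omega>)
      = (\<integral>\<omega>. (\<Sum>k\<in>I. a k * (Y k \<omega> - \<mu> k))\<^sup>2 \<partial>M)"
    by (simp add: Defs.variance_def sum_subtractf right_diff_distrib)
  also have "\<dots> = (\<integral>\<omega>. (\<Sum>k\<in>I. \<Sum>l\<in>I. a k * a l * C k l \<omega>) \<partial>M)"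
    by (simp add: C_def power2_eq_square sum_product algebra_simps)
  also have "\<dots> = (\<Sum>k\<in>I. \<Sum>l\<in>I. a k * a l * integral\<^sup>L M (C k l))"
    using C_int by (simp add: integral_sum)
  also have "\<dots> = (\<Sum>k\<in>I. (a k)\<^sup>2 * variance M (Y k))"
  proof (rule sum.cong[OF refl])
    fix k assume "k \<in> I"
    then have "(\<Sum>l\<in>I. a k * a l * integral\<^sup>L M (C k l))
        = (\<Sum>l\<in>I. if k = l then a k * a l * variance M (Y k) else 0)"
      by (intro sum.cong) (auto simp: C_integral)
    then show "(\<Sum>l\<in>I. a k * a l * integral\<^sup>L M (C k l)) = (a k)\<^sup>2 * variance M (Y k)"
      using assms(2) \<open>k \<in> I\<close> by (simp add: power2_eq_square)
  qed
  finally show ?thesis .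
qed

lemma (in prob_space) indep_vars_integral_mult:
  fixes f g :: "'b \<Rightarrow> real"
  assumes indep: "indep_vars M' Z I" and "k \<in> I" "l \<in> I" "k \<noteq> l"
    and f: "f \<in> borel_measurable (M' k)" and g: "g \<in> borel_measurable (M' l)"
    and "integrable M (\<lambda>\<omega>. f (Z k \<omega>))" "integrable M (\<lambda>\<omega>. g (Z l \<omega>))"
  shows "(\<integral>\<omega>. f (Z k \<omega>) * g (Z l \<omega>) \<partial>M) = (\<integral>\<omega>. f (Z k \<omega>) \<partial>M) * (\<integral>\<omega>. g (Z l \<omega>) \<partial>M)"
proof -
  have "indep_var (Pi\<^sub>M {k} M') (\<lambda>\<omega>. restrict (\<lambda>i. Z i \<omega>) {k}) (Pi\<^sub>M {l} M') (\<lambda>\<omega>. restrict (\<lambda>i. Z i \<omega>) {l})"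
    using assms(2-4) by (intro indep_var_restrict[OF indep]) auto
  then have "indep_var borel ((\<lambda>h. f (h k)) \<circ> (\<lambda>\<omega>. restrict (\<lambda>i. Z i \<omega>) {k}))
      borel ((\<lambda>h. g (h l)) \<circ> (\<lambda>\<omega>. restrict (\<lambda>i. Z i \<omega>) {l}))"
    by (rule indep_var_compose) (auto intro: measurable_compose[OF measurable_component_singleton] f g)
  then have "indep_var borel (\<lambda>\<omega>. f (Z k \<omega>)) borel (\<lambda>\<omega>. g (Z l \<omega>))"
    by (simp add: comp_def)
  then show ?thesis
    using assms(7,8) by (rule indep_var_lebesgue_integral)
qed

lemma finite_Gamma: "finite (Gamma m G p)"
  unfolding Gamma_def by auto

lemma Gamma_mono: "(\<And>j. j < m \<Longrightarrow> G j \<subseteq> G' j) \<Longrightarrow> Gamma m G p \<subseteq> Gamma m G' p"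
  unfolding Gamma_def by blast

definition shot_count :: "nat \<Rightarrow> (nat \<Rightarrow> pstring set) \<Rightarrow> (nat \<Rightarrow> nat) \<Rightarrow> pstring \<Rightarrow> nat" where
  "shot_count m G Ms p = (\<Sum>j\<in>Gamma m G p. Ms j)"

lemma shot_count_pos:
  assumes "j < m" "p \<in> G j" "0 < Ms j"
  shows "0 < shot_count m G Ms p"
  using assms member_le_sum[of j "Gamma m G p" Ms]
  by (simp add: shot_count_def Gamma_def finite_Gamma)

lemma shot_count_mono:
  "(\<And>j. j < m \<Longrightarrow> G j \<subseteq> G' j) \<Longrightarrow> shot_count m G Ms p \<le> shot_count m G' Ms p"
  unfolding shot_count_def by (intro sum_mono2 finite_Gamma Gamma_mono) auto

lemma shot_count_strict_mono:
  assumes "\<And>j. j < m \<Longrightarrow> G j \<subseteq> G' j" "j < m" "p \<in> G' j - G j" "0 < Ms j"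
  shows "shot_count m G Ms p < shot_count m G' Ms p"
  unfolding shot_count_def
  by (rule sum_strict_mono2[of _ _ j]) (use assms in \<open>auto simp: finite_Gamma Gamma_mono Gamma_def\<close>)

(* (i, j, t) indexes the outcome of P i in shot t of group j. *)
definition term_shots ::
  "nat \<Rightarrow> (nat \<Rightarrow> pstring) \<Rightarrow> nat \<Rightarrow> (nat \<Rightarrow> pstring set) \<Rightarrow> (nat \<Rightarrow> nat) \<Rightarrow> (nat \<times> nat \<times> nat) set"
where
  "term_shots N P m G Ms = (SIGMA i:{..<N}. SIGMA j:Gamma m G (P i). {..<Ms j})"

lemma mem_term_shots:
  "(i, j, t) \<in> term_shots N P m G Ms \<longleftrightarrow> i < N \<and> j < m \<and> P i \<in> G j \<and> t < Ms j"
  by (auto simp: term_shots_def Gamma_def)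

lemma finite_term_shots: "finite (term_shots N P m G Ms)"
  unfolding term_shots_def by (auto intro!: finite_SigmaI simp: finite_Gamma)

lemma sum_term_shots:
  "(\<Sum>(i, j, t)\<in>term_shots N P m G Ms. f i j t) = (\<Sum>i<N. \<Sum>j\<in>Gamma m G (P i). \<Sum>t<Ms j. f i j t)"
proof -
  have "(\<Sum>i<N. \<Sum>j\<in>Gamma m G (P i). \<Sum>t<Ms j. f i j t)
      = (\<Sum>i<N. \<Sum>(j, t)\<in>(SIGMA j:Gamma m G (P i). {..<Ms j}). f i j t)"
    by (intro sum.cong refl sum.Sigma) (auto simp: finite_Gamma)
  also have "\<dots> = (\<Sum>(i, j, t)\<in>term_shots N P m G Ms. f i j t)"
    unfolding term_shots_def by (subst sum.Sigma) (auto intro!: finite_SigmaI simp: finite_Gamma split_def)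
  finally show ?thesis ..
qed

lemma estimator_eq_sum_term_shots:
  "estimator N c P m G Ms X \<omega>
    = (\<Sum>(i, j, t)\<in>term_shots N P m G Ms. c i / shot_count m G Ms (P i) * X j t (P i) \<omega>)"
proof -
  \<comment> \<open>For Ms j = 0 both sides vanish, as the empty sample mean is 0 / 0 = 0.\<close>
  have "real (Ms j) / S * ((\<Sum>t<Ms j. x t) / real (Ms j)) = (\<Sum>t<Ms j. x t / S)" for j S and x :: "nat \<Rightarrow> real"
    by (cases "Ms j = 0") (simp_all add: sum_divide_distrib[symmetric])
  then show ?thesis
    unfolding sum_term_shots estimator_def sample_mean_def shot_count_def
    by (simp add: sum_distrib_left)
qed

lemma measurement_model_outcome:
  assumes "measurement_model n \<psi> m G Ms M X" "j < m" "t < Ms j" "p \<in> G j"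
  shows "prob_space M" and "X j t p \<in> borel_measurable M"
    and "\<And>\<omega>. \<omega> \<in> space M \<Longrightarrow> X j t p \<omega> \<in> {-1, 1}"
    and "integral\<^sup>L M (X j t p) = ev n \<psi> p"
  using assms by (auto simp: measurement_model_def)

lemma measurement_model_integrable:
  assumes "measurement_model n \<psi> m G Ms M X" "j < m" "t < Ms j" "p \<in> G j"
  shows "integrable M (X j t p)"
  using measurement_model_outcome[OF assms] by (intro integrable_pm_one)

lemma measurement_model_variance:
  assumes "measurement_model n \<psi> m G Ms M X" "j < m" "t < Ms j" "p \<in> G j"
  shows "variance M (X j t p) = sigma2 n \<psi> p"
  using measurement_model_outcome[OF assms] by (simp add: variance_pm_one sigma2_def)

lemma measurement_model_sigma2_nonneg:
  assumes "measurement_model n \<psi> m G Ms M X" "j < m" "0 < Ms j" "p \<in> G j"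
  shows "0 \<le> sigma2 n \<psi> p"
proof -
  have "0 \<le> variance M (X j 0 p)"
    unfolding Defs.variance_def by (rule Bochner_Integration.integral_nonneg) simp
  then show ?thesis
    using measurement_model_variance[OF assms(1,2) _ assms(4)] assms(3) by simp
qed

lemma measurement_model_indep_shots:
  assumes mm: "measurement_model n \<psi> m G Ms M X"
    and jt: "j < m" "t < Ms j" "p \<in> G j" and jt': "j' < m" "t' < Ms j'" "q \<in> G j'"
    and "(j, t) \<noteq> (j', t')"
  shows "(\<integral>\<omega>. X j t p \<omega> * X j' t' q \<omega> \<partial>M) = integral\<^sup>L M (X j t p) * integral\<^sup>L M (X j' t' q)"
proof -
  interpret prob_space M
    using mm by (simp add: measurement_model_def)
  define Z where "Z = (\<lambda>(j, t) \<omega>. restrict (\<lambda>p. X j t p \<omega>) (G j))"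
  have indep: "indep_vars (\<lambda>(j, t). Pi\<^sub>M (G j) (\<lambda>_. borel)) Z {(j, t). j < m \<and> t < Ms j}"
    using mm by (simp add: measurement_model_def Z_def)
  have "(\<integral>\<omega>. Z (j, t) \<omega> p * Z (j', t') \<omega> q \<partial>M) = (\<integral>\<omega>. Z (j, t) \<omega> p \<partial>M) * (\<integral>\<omega>. Z (j', t') \<omega> q \<partial>M)"
    using assms measurement_model_integrable[OF mm jt] measurement_model_integrable[OF mm jt']
    by (intro indep_vars_integral_mult[OF indep, of "(j, t)" "(j', t')" "\<lambda>h. h p" "\<lambda>h. h q"])
       (simp_all add: Z_def)
  then show ?thesis
    using jt(3) jt'(3) by (simp add: Z_def)
qed

lemma measurement_model_uncorrelated_term_shots:
  assumes H: "pauli_hamiltonian n N c P"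
    and og: "overlapped_grouping n (supp N P) m G"
    and uncorr: "\<forall>p\<in>supp N P. \<forall>q\<in>supp N P. p \<noteq> q \<longrightarrow> commute n p q \<longrightarrow> sigma_pair n \<psi> p q = 0"
    and mm: "measurement_model n \<psi> m G Ms M X"
    and k: "(i, j, t) \<in> term_shots N P m G Ms" and l: "(i', j', t') \<in> term_shots N P m G Ms"
    and "(i, j, t) \<noteq> (i', j', t')"
  shows "(\<integral>\<omega>. X j t (P i) \<omega> * X j' t' (P i') \<omega> \<partial>M)
    = integral\<^sup>L M (X j t (P i)) * integral\<^sup>L M (X j' t' (P i'))"
proof (cases "(j, t) = (j', t')")
  case False
  then show ?thesis
    using k l by (intro measurement_model_indep_shots[OF mm]) (auto simp: mem_term_shots)
next
  case True
  with assms(7) have "i \<noteq> i'" by auto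
  with H k l have "P i \<noteq> P i'"
    by (auto simp: pauli_hamiltonian_def inj_on_def mem_term_shots)
  moreover have "commute n (P i) (P i')"
    using og k l True by (auto simp: overlapped_grouping_def mem_term_shots)
  moreover have "P i \<in> supp N P" "P i' \<in> supp N P"
    using k l by (auto simp: supp_def mem_term_shots)
  ultimately have "ev2 n \<psi> (P i) (P i') = ev n \<psi> (P i) * ev n \<psi> (P i')"
    using uncorr by (auto simp: sigma_pair_def)
  then show ?thesis
    using mm k l True \<open>P i \<noteq> P i'\<close> by (auto simp: measurement_model_def mem_term_shots)
qed

lemma variance_estimator:
  assumes H: "pauli_hamiltonian n N c P"
    and og: "overlapped_grouping n (supp N P) m G"
    and uncorr: "\<forall>p\<in>supp N P. \<forall>q\<in>supp N P. p \<noteq> q \<longrightarrow> commute n p q \<longrightarrow> sigma_pair n \<psi> p q = 0"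
    and mm: "measurement_model n \<psi> m G Ms M X"
  shows "variance M (estimator N c P m G Ms X)
    = (\<Sum>i<N. (c i)\<^sup>2 * sigma2 n \<psi> (P i) / shot_count m G Ms (P i))"
proof -
  define T where "T = term_shots N P m G Ms"
  define S where "S i = real (shot_count m G Ms (P i))" for i
  define Y where "Y = (\<lambda>(i, j, t). X j t (P i))"
  define a where "a = (\<lambda>(i, j::nat, t::nat). c i / S i)"
  have outcome: "Y k \<in> borel_measurable M" "\<And>\<omega>. \<omega> \<in> space M \<Longrightarrow> Y k \<omega> \<in> {-1, 1}"
    "variance M (Y k) = sigma2 n \<psi> (P (fst k))" if "k \<in> T" for k
  proof -
    obtain i j t where k: "k = (i, j, t)"
      by (cases k)
    with that have jtp: "j < m" "t < Ms j" "P i \<in> G j"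
      by (simp_all add: T_def mem_term_shots)
    show "Y k \<in> borel_measurable M" "\<And>\<omega>. \<omega> \<in> space M \<Longrightarrow> Y k \<omega> \<in> {-1, 1}"
      "variance M (Y k) = sigma2 n \<psi> (P (fst k))"
      using measurement_model_outcome[OF mm jtp] measurement_model_variance[OF mm jtp]
      by (simp_all add: k Y_def)
  qed
  have ps: "prob_space M"
    using mm by (simp add: measurement_model_def)
  have "estimator N c P m G Ms X = (\<lambda>\<omega>. \<Sum>k\<in>T. a k * Y k \<omega>)"
    by (rule ext) (simp add: estimator_eq_sum_term_shots T_def S_def a_def Y_def split_def)
  then have "variance M (estimator N c P m G Ms X) = variance M (\<lambda>\<omega>. \<Sum>k\<in>T. a k * Y k \<omega>)"
    by simp
  also have "\<dots> = (\<Sum>k\<in>T. (a k)\<^sup>2 * variance M (Y k))"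
  proof (rule variance_sum_uncorrelated[OF ps])
    show "integrable M (\<lambda>\<omega>. Y k \<omega> * Y l \<omega>)" if "k \<in> T" "l \<in> T" for k l
    proof (rule integrable_pm_one[OF ps])
      fix \<omega> assume "\<omega> \<in> space M"
      then have "Y k \<omega> \<in> {-1, 1}" "Y l \<omega> \<in> {-1, 1}"
        using outcome that by blast+
      then show "Y k \<omega> * Y l \<omega> \<in> {-1, 1}"
        by auto
    qed (simp add: borel_measurable_times outcome that)
    show "(\<integral>\<omega>. Y k \<omega> * Y l \<omega> \<partial>M) = integral\<^sup>L M (Y k) * integral\<^sup>L M (Y l)"
      if "k \<in> T" "l \<in> T" "k \<noteq> l" for k l
    proof -
      obtain i j t i' j' t' where kl: "k = (i, j, t)" "l = (i', j', t')"
        by (cases k, cases l)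
      show ?thesis
        using that unfolding kl Y_def T_def prod.case
        by (rule measurement_model_uncorrelated_term_shots[OF H og uncorr mm])
    qed
    show "finite T"
      by (simp add: T_def finite_term_shots)
    show "integrable M (Y k)" if "k \<in> T" for k
      using outcome[OF that] by (intro integrable_pm_one[OF ps])
  qed
  also have "\<dots> = (\<Sum>(i, j, t)\<in>T. (c i / S i)\<^sup>2 * sigma2 n \<psi> (P i))"
    by (intro sum.cong refl) (auto simp: a_def outcome)
  also have "\<dots> = (\<Sum>i<N. \<Sum>j\<in>Gamma m G (P i). real (Ms j) * ((c i / S i)\<^sup>2 * sigma2 n \<psi> (P i)))"
    unfolding T_def sum_term_shots by simp
  also have "\<dots> = (\<Sum>i<N. S i * (c i / S i)\<^sup>2 * sigma2 n \<psi> (P i))"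
    by (simp add: S_def shot_count_def sum_distrib_right mult.assoc)
  also have "\<dots> = (\<Sum>i<N. (c i)\<^sup>2 * sigma2 n \<psi> (P i) / S i)"
    by (intro sum.cong refl) (simp add: power2_eq_square)
  finally show ?thesis
    by (simp add: S_def)
qed

theorem theorem2:
  fixes n N m :: nat and c :: "nat \<Rightarrow> real" and P :: "nat \<Rightarrow> pstring"
    and \<psi> :: "nat \<Rightarrow> complex" and G G' :: "nat \<Rightarrow> pstring set" and Ms :: "nat \<Rightarrow> nat"
    and MG :: "'w measure" and XG :: "nat \<Rightarrow> nat \<Rightarrow> pstring \<Rightarrow> 'w \<Rightarrow> real"
    and MR :: "'v measure" and XR :: "nat \<Rightarrow> nat \<Rightarrow> pstring \<Rightarrow> 'v \<Rightarrow> real"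
  assumes H: "pauli_hamiltonian n N c P"
    and state: "is_state n \<psi>"
    and grp: "grouping n (supp N P) m G"
    and rep: "repacking n (supp N P) m G G'"
    and uncorr: "\<forall>p\<in>supp N P. \<forall>q\<in>supp N P. p \<noteq> q \<longrightarrow> commute n p q \<longrightarrow> sigma_pair n \<psi> p q = 0"
    and shots: "\<forall>j<m. Ms j > 0"
    and modelG: "measurement_model n \<psi> m G Ms MG XG"
    and modelR: "measurement_model n \<psi> m G' Ms MR XR"
    and ex: "\<exists>j<m. \<exists>p\<in>G' j - G j. sigma2 n \<psi> p > 0"
  shows "variance MR (estimator N c P m G' Ms XR) < variance MG (estimator N c P m G Ms XG)"
proof -
  have ogG: "overlapped_grouping n (supp N P) m G" and ogR: "overlapped_grouping n (supp N P) m G'"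
    and sub: "\<And>j. j < m \<Longrightarrow> G j \<subseteq> G' j"
    using grp rep by (auto simp: grouping_def repacking_def)
  obtain j p where j: "j < m" "p \<in> G' j - G j" "0 < sigma2 n \<psi> p"
    using ex by blast
  then obtain s where s: "s < N" "P s = p"
    using ogR by (auto simp: overlapped_grouping_def supp_def)
  have covered: "\<exists>j<m. P i \<in> G j" if "i < N" for i
    using that ogG by (auto simp: overlapped_grouping_def supp_def)
  show ?thesis
    unfolding variance_estimator[OF H ogG uncorr modelG] variance_estimator[OF H ogR uncorr modelR]
  proof (rule sum_divide_strict_anti)
    show "0 \<le> (c i)\<^sup>2 * sigma2 n \<psi> (P i)" if i: "i \<in> {..<N}" for i
    proof -
      obtain j where "j < m" "P i \<in> G j"
        using covered i by auto
      then show ?thesis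
        using shots measurement_model_sigma2_nonneg[OF modelG] by simp
    qed
    show "0 < real (shot_count m G Ms (P i))" if "i \<in> {..<N}" for i
      using covered that shots by (auto intro: shot_count_pos)
    show "real (shot_count m G Ms (P i)) \<le> real (shot_count m G' Ms (P i))" for i
      using sub by (simp add: shot_count_mono)
    show "0 < (c s)\<^sup>2 * sigma2 n \<psi> (P s)"
      using H s j by (simp add: pauli_hamiltonian_def)
    show "real (shot_count m G Ms (P s)) < real (shot_count m G' Ms (P s))"
      using sub j s shots by (simp add: shot_count_strict_mono)
  qed (use s in auto)
qed

end
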